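(* Let $V$ be a finite nonempty set, $U,U'\subseteq V$ disjoint, $U''=V\setminus(U\cup U')$, $i\in U$, $j\in U'$, and $\hat x$ a maximally specific partial function on $P_V$. Let $P'_{01}=\{pq\in U\times U'\mid \hat x_{pi}\neq 0\neq \hat x_{jq}\}\setminus\hat x^{-1}(1)$ and $P'_{10}=\big((U''\times U)\cup(U'\times U)\cup(U'\times U'')\big)\setminus\hat x^{-1}(0)$. If $\hat x^{-1}(0)\cap P'_{01}=\emptyset$ and $\hat x^{-1}(1)\cap P'_{10}=\emptyset$, then $\gamma^{ij|1}(X_V[\hat x])\subseteq X_V[\hat x]$.
   Context: $P_V=\{pq\in V^2\mid p\neq q\}$; $X_V$ is the set of $x\in\{0,1\}^{P_V}$ with $x_{pq}+x_{qr}-x_{pr}\le 1$ for all pairwise distinct $p,q,r\in V$. A partial function $\tilde x$ is a map from $\operatorname{dom}(\tilde x)\subseteq P_V$ to $\{0,1\}$, $\tilde x^{-1}(b)$ the pairs mapped to $b$; convention $\tilde x_{aa}=1$ and $x_{aa}=1$ for all $a\in V$, $x\in X_V$. $X_V[\tilde x]=\{x\in X_V\mid x_{pq}=\tilde x_{pq}\ \forall pq\in\operatorname{dom}(\tilde x)\}$. A pair $pq$ is decided if $x_{pq}=x'_{pq}$ for all $x,x'\in X_V[\tilde x]$; $\tilde x$ is maximally specific if $X_V[\tilde x]\ne\emptyset$ and the decided pairs are exactly $\operatorname{dom}(\tilde x)$. For $A,B\subseteq V$ disjoint with $A\cup B=V$, $\sigma_{A\times B}\colon X_V\to X_V$ sets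 $\sigma_{A\times B}(x)_{pq}=0$ if $pq\in A\times B$ and $=x_{pq}$ otherwise. For $ij\in P_V$, $\sigma_{ij}\colon X_V\to X_V$ sets $\sigma_{ij}(x)_{pq}=1$ if $x_{pi}=x_{jq}=1$ and $=x_{pq}$ otherwise. Let $\gamma=\sigma_{ij}\circ\sigma_{(V\setminus U)\times U}\circ\sigma_{U'\times(V\setminus U')}$ and $\gamma^{ij|1}\colon X_V[\hat x]\to X_V$ with $\gamma^{ij|1}(x)=x$ if $x_{ij}=1$ and $\gamma^{ij|1}(x)=\gamma(x)$ if $x_{ij}=0$. *)

theory Defs
  imports Main
begin

text \<open>Pairs P_V. An element x of {0,1}^(P_V) is modelled as a function
  on 'a \<times> 'a to bool (True = 1, False = 0) which is False outside P_V.\<close>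

definition PV :: "'a set \<Rightarrow> ('a \<times> 'a) set" where
  "PV V = {(p, q). p \<in> V \<and> q \<in> V \<and> p \<noteq> q}"

definition xval :: "('a \<times> 'a \<Rightarrow> bool) \<Rightarrow> 'a \<Rightarrow> 'a \<Rightarrow> bool" where
  "xval x p q = (if p = q then True else x (p, q))"

definition XV :: "'a set \<Rightarrow> ('a \<times> 'a \<Rightarrow> bool) set" where
  "XV V = {x. (\<forall>pq. pq \<notin> PV V \<longrightarrow> x pq = False) \<and>
     (\<forall>p\<in>V. \<forall>q\<in>V. \<forall>r\<in>V. p \<noteq> q \<and> q \<noteq> r \<and> p \<noteq> r \<longrightarrow>
        of_bool (x (p, q)) + of_bool (x (q, r)) - of_bool (x (p, r)) \<le> (1::int))}"

definition pval :: "('a \<times> 'a \<Rightarrow> bool option) \<Rightarrow> 'a \<Rightarrow> 'a \<Rightarrow> bool option" where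
  "pval xh p q = (if p = q then Some True else xh (p, q))"

definition preim :: "('a \<times> 'a \<Rightarrow> bool option) \<Rightarrow> bool \<Rightarrow> ('a \<times> 'a) set" where
  "preim xh b = {pq. xh pq = Some b}"

definition XVp :: "'a set \<Rightarrow> ('a \<times> 'a \<Rightarrow> bool option) \<Rightarrow> ('a \<times> 'a \<Rightarrow> bool) set" where
  "XVp V xh = {x \<in> XV V. \<forall>pq \<in> dom xh. xh pq = Some (x pq)}"

definition decided :: "'a set \<Rightarrow> ('a \<times> 'a \<Rightarrow> bool option) \<Rightarrow> ('a \<times> 'a) \<Rightarrow> bool" where
  "decided V xh pq = (\<forall>x \<in> XVp V xh. \<forall>x' \<in> XVp V xh. x pq = x' pq)"

definition max_specific :: "'a set \<Rightarrow> ('a \<times> 'a \<Rightarrow> bool option) \<Rightarrow> bool" where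
  "max_specific V xh = (XVp V xh \<noteq> {} \<and> {pq \<in> PV V. decided V xh pq} = dom xh)"

definition sigma_cut :: "'a set \<Rightarrow> 'a set \<Rightarrow> 'a set \<Rightarrow> ('a \<times> 'a \<Rightarrow> bool) \<Rightarrow> ('a \<times> 'a \<Rightarrow> bool)" where
  "sigma_cut V A B x = (\<lambda>pq. if pq \<in> PV V then (if pq \<in> A \<times> B then False else x pq) else x pq)"

definition sigma_join :: "'a set \<Rightarrow> 'a \<Rightarrow> 'a \<Rightarrow> ('a \<times> 'a \<Rightarrow> bool) \<Rightarrow> ('a \<times> 'a \<Rightarrow> bool)" where
  "sigma_join V i j x = (\<lambda>(p, q). if (p, q) \<in> PV V then
      (if xval x p i \<and> xval x j q then True else x (p, q)) else x (p, q))"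

definition gamma :: "'a set \<Rightarrow> 'a set \<Rightarrow> 'a set \<Rightarrow> 'a \<Rightarrow> 'a \<Rightarrow> ('a \<times> 'a \<Rightarrow> bool) \<Rightarrow> ('a \<times> 'a \<Rightarrow> bool)" where
  "gamma V U U' i j = sigma_join V i j \<circ> sigma_cut V (V - U) U \<circ> sigma_cut V U' (V - U')"

definition gamma1 :: "'a set \<Rightarrow> 'a set \<Rightarrow> 'a set \<Rightarrow> 'a \<Rightarrow> 'a \<Rightarrow> ('a \<times> 'a \<Rightarrow> bool) \<Rightarrow> ('a \<times> 'a \<Rightarrow> bool)" where
  "gamma1 V U U' i j x = (if x (i, j) then x else gamma V U U' i j x)"

end

theory Submission
  imports Defs
begin

text \<open>Every x in X_V is a transitive relation on V (reflexive by the convention x_aa = 1).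
  A cut sigma_{A x B} with V \<subseteq> A \<union> B and the join sigma_{ij} preserve transitivity, so gamma
  maps X_V into itself. In closed form, gamma deletes the pairs of U' x (V - U') \<union> (V - U) x U
  and adds the pairs pq \<in> U x U' with x_pi = x_jq = 1. The two hypotheses on xh say exactly
  that no pair fixed to 1 is deleted and no pair fixed to 0 is added, so gamma even maps
  X_V[xh] into itself without the case distinction on x_ij.\<close>

lemma of_bool_triangle_le_1_iff:
  "(of_bool a + of_bool b - of_bool c \<le> (1::int)) \<longleftrightarrow> (a \<and> b \<longrightarrow> c)"
  by (cases a; cases b; cases c) auto

lemma transp_on_xval_iff:
  "transp_on V (xval x) \<longleftrightarrow>
    (\<forall>p\<in>V. \<forall>q\<in>V. \<forall>r\<in>V. p \<noteq> q \<and> q \<noteq> r \<and> p \<noteq> r \<longrightarrow> x (p, q) \<and> x (q, r) \<longrightarrow> x (p, r))"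
  (is "_ \<longleftrightarrow> ?distinct")
proof
  assume trans: "transp_on V (xval x)"
  show ?distinct
  proof (intro ballI impI)
    fix p q r
    assume V: "p \<in> V" "q \<in> V" "r \<in> V" and ne: "p \<noteq> q \<and> q \<noteq> r \<and> p \<noteq> r"
      and "x (p, q) \<and> x (q, r)"
    then have "xval x p q" "xval x q r" by (simp_all add: xval_def)
    with trans V have "xval x p r" by (meson transp_onD)
    with ne show "x (p, r)" by (simp add: xval_def)
  qed
next
  assume distinct: ?distinct
  show "transp_on V (xval x)"
  proof (rule transp_onI)
    fix p q r
    assume V: "p \<in> V" "q \<in> V" "r \<in> V" and pq: "xval x p q" and qr: "xval x q r"
    show "xval x p r"
    proof (cases "p = q \<or> q = r \<or> p = r")
      case True
      with pq qr show ?thesis by (auto simp: xval_def)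
    next
      case False
      with pq qr have "x (p, q) \<and> x (q, r)" by (simp add: xval_def)
      with distinct V False have "x (p, r)" by blast
      then show ?thesis by (simp add: xval_def)
    qed
  qed
qed

lemma XV_iff_transp_on:
  "x \<in> XV V \<longleftrightarrow> (\<forall>pq. pq \<notin> PV V \<longrightarrow> \<not> x pq) \<and> transp_on V (xval x)"
  unfolding XV_def of_bool_triangle_le_1_iff transp_on_xval_iff by simp

lemma xval_sigma_cut:
  assumes "p \<in> V" "q \<in> V"
  shows "xval (sigma_cut V A B x) p q \<longleftrightarrow> p = q \<or> xval x p q \<and> (p, q) \<notin> A \<times> B"
  using assms unfolding xval_def sigma_cut_def PV_def by auto

lemma xval_sigma_join:
  assumes "p \<in> V" "q \<in> V"
  shows "xval (sigma_join V i j x) p q \<longleftrightarrow> xval x p q \<or> xval x p i \<and> xval x j q"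
  using assms unfolding xval_def sigma_join_def PV_def by auto

lemma sigma_cut_in_XV:
  assumes "x \<in> XV V" "V \<subseteq> A \<union> B"
  shows "sigma_cut V A B x \<in> XV V"
proof -
  have support: "\<forall>pq. pq \<notin> PV V \<longrightarrow> \<not> x pq" and trans: "transp_on V (xval x)"
    using assms(1) unfolding XV_iff_transp_on by auto
  have "transp_on V (xval (sigma_cut V A B x))"
  proof (rule transp_onI)
    fix p q r
    assume V: "p \<in> V" "q \<in> V" "r \<in> V"
      and pq: "xval (sigma_cut V A B x) p q" and qr: "xval (sigma_cut V A B x) q r"
    show "xval (sigma_cut V A B x) p r"
    proof (cases "p = r")
      case False
      have pq': "p = q \<or> xval x p q \<and> (p, q) \<notin> A \<times> B" using pq V by (simp add: xval_sigma_cut)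
      have qr': "q = r \<or> xval x q r \<and> (q, r) \<notin> A \<times> B" using qr V by (simp add: xval_sigma_cut)
      have "(p, r) \<notin> A \<times> B"
      proof
        assume pr: "(p, r) \<in> A \<times> B"
        \<comment> \<open>whichever side of the cut q lies on, pq or qr crosses it\<close>
        have "q \<in> A \<or> q \<in> B" using V(2) assms(2) by blast
        then show False
        proof
          assume "q \<in> A"
          with pr have "(q, r) \<in> A \<times> B" by simp
          with qr' have "q = r" by blast
          with pq' pr False show False by blast
        next
          assume "q \<in> B"
          with pr have "(p, q) \<in> A \<times> B" by simp
          with pq' have "p = q" by blast
          with qr' pr False show False by blast
        qed
      qed
      moreover have "xval x p q" "xval x q r" using pq' qr' by (auto simp: xval_def)
      then have "xval x p r" using transp_onD[OF trans V] by blast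
      ultimately show ?thesis using V by (simp add: xval_sigma_cut)
    qed (simp add: xval_def)
  qed
  with support show ?thesis unfolding XV_iff_transp_on sigma_cut_def by auto
qed

lemma sigma_join_in_XV:
  assumes "x \<in> XV V" "i \<in> V" "j \<in> V"
  shows "sigma_join V i j x \<in> XV V"
proof -
  have support: "\<forall>pq. pq \<notin> PV V \<longrightarrow> \<not> x pq" and trans: "transp_on V (xval x)"
    using assms(1) unfolding XV_iff_transp_on by auto
  have "transp_on V (xval (sigma_join V i j x))"
  proof (rule transp_onI)
    fix p q r
    assume V: "p \<in> V" "q \<in> V" "r \<in> V"
      and "xval (sigma_join V i j x) p q" "xval (sigma_join V i j x) q r"
    then show "xval (sigma_join V i j x) p r"
      using transp_onD[OF trans] V assms(2,3)
      unfolding xval_sigma_join[OF V(1,2)] xval_sigma_join[OF V(2,3)] xval_sigma_join[OF V(1,3)]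
      by blast
  qed
  with support show ?thesis unfolding XV_iff_transp_on sigma_join_def by auto
qed

lemma gamma_in_XV:
  assumes "x \<in> XV V" "U \<subseteq> V" "U' \<subseteq> V" "i \<in> V" "j \<in> V"
  shows "gamma V U U' i j x \<in> XV V"
  unfolding gamma_def comp_def
  by (intro sigma_join_in_XV sigma_cut_in_XV assms) auto

lemma gamma_pair_iff:
  assumes "U \<subseteq> V" "U' \<subseteq> V" "U \<inter> U' = {}" "i \<in> U" "j \<in> U'"
    and "p \<in> V" "q \<in> V" "p \<noteq> q"
  shows "gamma V U U' i j x (p, q) \<longleftrightarrow>
    x (p, q) \<and> (p, q) \<notin> U' \<times> (V - U') \<union> (V - U) \<times> U
    \<or> p \<in> U \<and> q \<in> U' \<and> xval x p i \<and> xval x j q"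
proof -
  define z where "z = sigma_cut V (V - U) U (sigma_cut V U' (V - U') x)"
  have iV: "i \<in> V" and jV: "j \<in> V" using assms by auto
  have xval_z: "xval z a b \<longleftrightarrow> a = b \<or> xval x a b \<and> (a, b) \<notin> U' \<times> (V - U') \<union> (V - U) \<times> U"
    if "a \<in> V" "b \<in> V" for a b
    unfolding z_def xval_sigma_cut[OF that] by blast
  have "xval z p q \<longleftrightarrow> x (p, q) \<and> (p, q) \<notin> U' \<times> (V - U') \<union> (V - U) \<times> U"
    using xval_z[OF assms(6,7)] assms(8) by (simp add: xval_def)
  moreover have "xval z p i \<longleftrightarrow> p \<in> U \<and> xval x p i"
    using xval_z[OF assms(6) iV] assms(1-4,6) by (auto simp: xval_def)
  moreover have "xval z j q \<longleftrightarrow> q \<in> U' \<and> xval x j q"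
    using xval_z[OF jV assms(7)] assms(2,3,5,7) by (auto simp: xval_def)
  moreover have "gamma V U U' i j x (p, q) \<longleftrightarrow> xval z p q \<or> xval z p i \<and> xval z j q"
    using xval_sigma_join[OF assms(6,7), of i j z] assms(8)
    unfolding gamma_def z_def by (simp add: xval_def)
  ultimately show ?thesis by blast
qed

lemma XVp_pval_Some:
  assumes "x \<in> XVp V xh" "pval xh p q = Some b"
  shows "xval x p q = b"
  using assms unfolding XVp_def pval_def xval_def
  by (auto split: if_splits dest!: bspec[where x = "(p, q)"])

lemma gamma_in_XVp:
  assumes "U \<subseteq> V" "U' \<subseteq> V" "U \<inter> U' = {}" "i \<in> U" "j \<in> U'"
    and "dom xh \<subseteq> PV V"
    and no_new_one: "\<And>p q. xh (p, q) = Some False \<Longrightarrow> p \<in> U \<Longrightarrow> q \<in> U' \<Longrightarrow>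
      pval xh p i = Some False \<or> pval xh j q = Some False"
    and no_lost_one: "\<And>p q. xh (p, q) = Some True \<Longrightarrow>
      (p, q) \<notin> U' \<times> (V - U') \<union> (V - U) \<times> U"
    and x: "x \<in> XVp V xh"
  shows "gamma V U U' i j x \<in> XVp V xh"
proof -
  have "xh (p, q) = Some (gamma V U U' i j x (p, q))" if pq: "(p, q) \<in> dom xh" for p q
  proof -
    have V: "p \<in> V" "q \<in> V" "p \<noteq> q" using pq assms(6) unfolding PV_def by auto
    have xh_pq: "xh (p, q) = Some (x (p, q))" using x pq unfolding XVp_def by auto
    have "gamma V U U' i j x (p, q) \<longleftrightarrow> x (p, q)"
    proof (cases "x (p, q)")
      case True
      with xh_pq no_lost_one show ?thesis unfolding gamma_pair_iff[OF assms(1-5) V] by simp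
    next
      case False
      have "\<not> (xval x p i \<and> xval x j q)" if "p \<in> U" "q \<in> U'"
        using no_new_one[OF _ that] False xh_pq XVp_pval_Some[OF x] by auto
      with False show ?thesis unfolding gamma_pair_iff[OF assms(1-5) V] by blast
    qed
    with xh_pq show ?thesis by simp
  qed
  moreover have "gamma V U U' i j x \<in> XV V"
    using x assms(1,2,4,5) by (intro gamma_in_XV) (auto simp: XVp_def)
  ultimately show ?thesis unfolding XVp_def by auto
qed

theorem corollary6p5:
  fixes V U U' :: "'a set" and i j :: 'a and xh :: "'a \<times> 'a \<Rightarrow> bool option"
  assumes "finite V" and "V \<noteq> {}"
    and "U \<subseteq> V" and "U' \<subseteq> V" and "U \<inter> U' = {}"
    and "i \<in> U" and "j \<in> U'"
    and "dom xh \<subseteq> PV V"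
    and "max_specific V xh"
    and "preim xh False \<inter>
           ({(p, q) \<in> U \<times> U'. pval xh p i \<noteq> Some False \<and> pval xh j q \<noteq> Some False}
             - preim xh True) = {}"
    and "preim xh True \<inter>
           ((((V - (U \<union> U')) \<times> U) \<union> (U' \<times> U) \<union> (U' \<times> (V - (U \<union> U'))))
             - preim xh False) = {}"
  shows "gamma1 V U U' i j ` XVp V xh \<subseteq> XVp V xh"
proof -
  have no_new_one: "pval xh p i = Some False \<or> pval xh j q = Some False"
    if "xh (p, q) = Some False" "p \<in> U" "q \<in> U'" for p q
    using equals0D[OF assms(10), of "(p, q)"] that by (auto simp: preim_def)
  have no_lost_one: "(p, q) \<notin> U' \<times> (V - U') \<union> (V - U) \<times> U"
    if "xh (p, q) = Some True" for p q
    using equals0D[OF assms(11), of "(p, q)"] that assms(3-5) by (auto simp: preim_def)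
  have "gamma V U U' i j x \<in> XVp V xh" if "x \<in> XVp V xh" for x
    using gamma_in_XVp[OF assms(3-8) no_new_one no_lost_one that] .
  then show ?thesis unfolding gamma1_def by auto
qed

end
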